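(* Let $(X_n)$ be a stationary, reversible, discrete-in-time Markov process on $\mathbb{R}^d$ with positive transition density $p$, ergodic with respect to a unique invariant probability $\mu(\mathrm{d}x)=\pi(x)\mathrm{d}x$, $\pi>0$. Let $A,B\subset\mathbb{R}^d$ be disjoint closed sets with smooth boundaries with $(A\cup B)^c\neq\emptyset$, let $q$ be the forward committor from $A$ to $B$ and $k_{AB}$ the transition rate. Define $\mathcal{F}_{AB}=\{f\in L^2_\mu(\mathbb{R}^d): f|_A\equiv0,\ f|_B\equiv1\}$. Then $$\mathcal{E}(f)=k_{AB}+\mathcal{E}(f-q)\quad\text{for all }f\in\mathcal{F}_{AB}.$$ In particular, $q$ solves $\min_{f\in\mathcal{F}_{AB}}\mathcal{E}(f)$ and the minimum value is $k_{AB}$.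
   Context: Reversible: $p(x,y)\pi(x)=p(y,x)\pi(y)$. $\mathcal{E}(f)=\frac12\int\int(f(y)-f(x))^2p(x,y)\,\mathrm{d}y\,\mu(\mathrm{d}x)$. A segment $X_m,\dots,X_{m+j}$ is reactive if $X_m\in A$, $X_{m+j}\in B$, $X_i\in(A\cup B)^c$ for $m<i<m+j$; $k_{AB}=\lim_{N\to\infty}M_N^R/N$ where $M_N^R$ counts reactive segments starting in the first $N$ steps. $q(x)=\mathbb{P}(\text{starting from }x,\ X_n\text{ enters }B\text{ before }A)$, which satisfies $\int p(x,y)q(y)\,\mathrm{d}y=q(x)$ on $(A\cup B)^c$, $q|_A=0$, $q|_B=1$. *)

theory Defs
  imports "HOL-Probability.Probability"
begin

text \<open>C-infinity real-valued functions on an open set: continuous, differentiable, and every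
  directional derivative is again C-infinity (greatest fixed point = derivatives of all orders).\<close>
coinductive smooth_on :: "'a::euclidean_space set \<Rightarrow> ('a \<Rightarrow> real) \<Rightarrow> bool" where
  "\<lbrakk> continuous_on U f; f differentiable_on U;
     \<And>v. smooth_on U (\<lambda>x. frechet_derivative f (at x) v) \<rbrakk> \<Longrightarrow> smooth_on U f"

definition smooth_boundary :: "'a::euclidean_space set \<Rightarrow> bool" where
  "smooth_boundary S \<longleftrightarrow>
     (\<forall>z\<in>frontier S. \<exists>U \<phi>. open U \<and> z \<in> U \<and> smooth_on U \<phi> \<and>
        frechet_derivative \<phi> (at z) \<noteq> (\<lambda>v. 0) \<and> S \<inter> U = {x\<in>U. \<phi> x \<le> 0})"

text \<open>Iterated integral: probability, starting from x, that the next steps lie in the given sets.\<close>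
fun path_int :: "('a::euclidean_space \<Rightarrow> 'a \<Rightarrow> real) \<Rightarrow> 'a set list \<Rightarrow> 'a \<Rightarrow> real" where
  "path_int p [] x = 1"
| "path_int p (S # Ss) x = (\<integral>y. indicator S y * p x y * path_int p Ss y \<partial>lborel)"

text \<open>Probability (for the chain started at x) of entering B before A within n steps
  (convention: 1 on B, 0 on A).\<close>
fun hit_before :: "('a::euclidean_space \<Rightarrow> 'a \<Rightarrow> real) \<Rightarrow> 'a set \<Rightarrow> 'a set \<Rightarrow> nat \<Rightarrow> 'a \<Rightarrow> real" where
  "hit_before p A B 0 x = (if x \<in> B then 1 else 0)"
| "hit_before p A B (Suc n) x =
     (if x \<in> B then 1 else if x \<in> A then 0 else (\<integral>y. p x y * hit_before p A B n y \<partial>lborel))"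

definition committor :: "('a::euclidean_space \<Rightarrow> 'a \<Rightarrow> real) \<Rightarrow> 'a set \<Rightarrow> 'a set \<Rightarrow> 'a \<Rightarrow> real" where
  "committor p A B x = lim (\<lambda>n. hit_before p A B n x)"

definition reactive_count :: "'a set \<Rightarrow> 'a set \<Rightarrow> (nat \<Rightarrow> 'w \<Rightarrow> 'a) \<Rightarrow> nat \<Rightarrow> 'w \<Rightarrow> nat" where
  "reactive_count A B X N \<omega> = card {m. m < N \<and> (\<exists>j>0. X m \<omega> \<in> A \<and> X (m + j) \<omega> \<in> B \<and>
       (\<forall>i. m < i \<and> i < m + j \<longrightarrow> X i \<omega> \<notin> A \<union> B))}"

definition trans_rate :: "'w measure \<Rightarrow> 'a set \<Rightarrow> 'a set \<Rightarrow> (nat \<Rightarrow> 'w \<Rightarrow> 'a) \<Rightarrow> real" where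
  "trans_rate M A B X = (THE k. AE \<omega> in M.
       (\<lambda>N. real (reactive_count A B X N \<omega>) / real N) \<longlonglongrightarrow> k)"

definition dirichlet_energy :: "('a::euclidean_space \<Rightarrow> 'a \<Rightarrow> real) \<Rightarrow> ('a \<Rightarrow> real) \<Rightarrow> ('a \<Rightarrow> real) \<Rightarrow> real" where
  "dirichlet_energy p \<pi> f =
     (1/2) * (\<integral>x. (\<integral>y. (f y - f x)^2 * p x y \<partial>lborel) \<partial>(density lborel (\<lambda>x. ennreal (\<pi> x))))"

definition L2_mu :: "('a::euclidean_space \<Rightarrow> real) \<Rightarrow> ('a \<Rightarrow> real) \<Rightarrow> bool" where
  "L2_mu \<pi> f \<longleftrightarrow> f \<in> borel_measurable borel \<and>
     integrable (density lborel (\<lambda>x. ennreal (\<pi> x))) (\<lambda>x. (f x)^2)"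

definition F_AB :: "('a::euclidean_space \<Rightarrow> real) \<Rightarrow> 'a set \<Rightarrow> 'a set \<Rightarrow> ('a \<Rightarrow> real) set" where
  "F_AB \<pi> A B = {f. L2_mu \<pi> f \<and> (\<forall>x\<in>A. f x = 0) \<and> (\<forall>x\<in>B. f x = 1)}"

end

theory Submission
  imports Defs
begin

(* Reversibility makes the transition operator P self-adjoint in L^2(mu), so the Dirichlet form
   satisfies E(u, v) = <v, (I - P) u>. The committor q is P-harmonic off A and B and agrees with
   every f in F_AB on A and B, so the cross term in E(q + (f - q)) vanishes and
   E(f) = E(q) + E(f - q). Moreover E(q) = <q, (I - P) q> = int_A pi P q, the stationary
   probability that the chain sits in A and then reaches B before returning to A, i.e. that a
   reactive segment starts at time 0. Birkhoff's ergodic theorem for the shift on path space,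
   applied to this indicator, identifies that probability with the almost sure limit k_AB of
   M_N^R / N; the ergodic theorem for bounded observables follows from a maximal inequality
   obtained by cutting orbits into blocks on which the average exceeds a given rate. *)

section \<open>Birkhoff sums and the ergodic theorem\<close>

lemma measurable_funpow [measurable]:
  assumes "T \<in> measurable N N"
  shows "T ^^ m \<in> measurable N N"
  by (induction m) (auto intro: measurable_compose[OF _ assms])

definition birkhoff_sum :: "('a \<Rightarrow> 'a) \<Rightarrow> ('a \<Rightarrow> real) \<Rightarrow> nat \<Rightarrow> 'a \<Rightarrow> real" where
  "birkhoff_sum T g n w = (\<Sum>m<n. g ((T ^^ m) w))"

lemma birkhoff_sum_add:
  "birkhoff_sum T g (n + k) w = birkhoff_sum T g n w + birkhoff_sum T g k ((T ^^ n) w)"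
proof (induction k)
  case (Suc k)
  have "(T ^^ k) ((T ^^ n) w) = (T ^^ (n + k)) w" by (simp add: funpow_add add.commute)
  with Suc show ?case by (simp add: birkhoff_sum_def)
qed (simp add: birkhoff_sum_def)

lemma birkhoff_sum_Suc: "birkhoff_sum T g (Suc n) w = g w + birkhoff_sum T g n (T w)"
  using birkhoff_sum_add[of T g 1 n w] by (simp add: birkhoff_sum_def)

lemma birkhoff_sum_nonneg: "(\<And>w. 0 \<le> g w) \<Longrightarrow> 0 \<le> birkhoff_sum T g n w"
  by (simp add: birkhoff_sum_def sum_nonneg)

lemma birkhoff_sum_mono: "(\<And>w. g w \<le> h w) \<Longrightarrow> birkhoff_sum T g n w \<le> birkhoff_sum T h n w"
  unfolding birkhoff_sum_def by (intro sum_mono) auto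

lemma birkhoff_sum_measurable [measurable]:
  assumes "T \<in> measurable N N" "g \<in> borel_measurable N"
  shows "birkhoff_sum T g n \<in> borel_measurable N"
  unfolding birkhoff_sum_def using assms by measurable

text \<open>Cut the orbit greedily into good blocks; only the last, unfinished one (shorter than \<open>L\<close>)
  can fall short of the rate \<open>c\<close>.\<close>
lemma birkhoff_sum_ge_by_blocks:
  assumes c: "0 \<le> c" and g: "\<And>w. 0 \<le> g w"
    and D: "\<And>w. w \<in> D \<Longrightarrow> T w \<in> D"
    and blocks: "\<And>w. w \<in> D \<Longrightarrow> c \<le> g w \<or> (\<exists>k. 1 \<le> k \<and> k \<le> L \<and> c * k \<le> birkhoff_sum T g k w)"
    and w: "w \<in> D"
  shows "c * (real n - real L) \<le> birkhoff_sum T g n w"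
  using w
proof (induction n arbitrary: w rule: less_induct)
  case (less n)
  have D_funpow: "(T ^^ k) w \<in> D" for k
    using less.prems D by (induction k) auto
  show ?case
  proof (cases "n \<le> L")
    case True
    then have "c * (real n - real L) \<le> 0" using c by (simp add: mult_nonneg_nonpos)
    also have "0 \<le> birkhoff_sum T g n w" by (rule birkhoff_sum_nonneg) (rule g)
    finally show ?thesis .
  next
    case False
    from blocks[OF less.prems] show ?thesis
    proof (elim disjE exE conjE)
      assume gw: "c \<le> g w"
      obtain m where n: "n = Suc m" using False by (cases n) auto
      have "c * (real m - real L) \<le> birkhoff_sum T g m (T w)"
        using less.IH[of m "T w"] n D[OF less.prems] by simp
      then show ?thesis using gw n by (simp add: birkhoff_sum_Suc algebra_simps)
    next
      fix k assume k: "1 \<le> k" "k \<le> L" "c * k \<le> birkhoff_sum T g k w"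
      then have n: "n = k + (n - k)" using False by simp
      have "c * (real (n - k) - real L) \<le> birkhoff_sum T g (n - k) ((T ^^ k) w)"
        using less.IH[of "n - k" "(T ^^ k) w"] k False D_funpow by simp
      moreover have "real (n - k) = real n - real k" using n by linarith
      ultimately show ?thesis
        using k(3) birkhoff_sum_add[of T g k "n - k" w] n by (simp add: algebra_simps)
    qed
  qed
qed

text \<open>\<open>rate_above c u\<close> encodes \<open>limsup u n / n > c\<close> with the countably many margins
  \<open>1 / (k + 1)\<close>, which keeps the corresponding sets of points measurable.\<close>
definition rate_above :: "real \<Rightarrow> (nat \<Rightarrow> real) \<Rightarrow> bool" where
  "rate_above c u \<longleftrightarrow> (\<exists>k::nat. \<exists>\<^sub>F n in sequentially. (c + 1 / Suc k) * n < u n)"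

lemma frequently_sequentially_seg:
  "(\<exists>\<^sub>F n in sequentially. P (n + k)) \<longleftrightarrow> (\<exists>\<^sub>F n in sequentially. P n)"
  unfolding frequently_def using eventually_sequentially_seg[of "\<lambda>n. \<not> P n"] by simp

lemma eventually_const_le_mult_of_nat:
  fixes \<delta> E :: real
  assumes "0 < \<delta>"
  shows "\<forall>\<^sub>F n in sequentially. E \<le> \<delta> * n"
proof -
  obtain N :: nat where "E / \<delta> \<le> N" using real_arch_simple by blast
  then have "E \<le> \<delta> * n" if "N \<le> n" for n
    using that assms by (simp add: pos_divide_le_eq mult.commute order_trans)
  then show ?thesis by (auto simp: eventually_sequentially)
qed

lemma rate_above_transfer:
  assumes u: "rate_above c u" and uv: "\<And>n. u (n + a) \<le> v (n + b) + K"
  shows "rate_above c v"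
proof -
  obtain k :: nat where k: "\<exists>\<^sub>F n in sequentially. (c + 1 / Suc k) * n < u n"
    using u by (auto simp: rate_above_def)
  define \<delta> where "\<delta> = 1 / real (Suc k)"
  have \<delta>: "0 < \<delta>" by (simp add: \<delta>_def)
  have half: "1 / real (Suc (2 * k + 1)) = \<delta> / 2" by (simp add: \<delta>_def field_simps)
  have "\<exists>\<^sub>F n in sequentially. (c + \<delta>) * (n + a) < u (n + a)"
    using k frequently_sequentially_seg[of "\<lambda>n. (c + \<delta>) * n < u n" a] by (simp add: \<delta>_def)
  moreover have "\<forall>\<^sub>F n in sequentially. (c + \<delta> / 2) * (n + b) + K \<le> (c + \<delta>) * (n + a)"
  proof -
    have ev: "\<forall>\<^sub>F n in sequentially. K + (c + \<delta> / 2) * b - (c + \<delta>) * a \<le> \<delta> / 2 * n"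
      by (rule eventually_const_le_mult_of_nat) (use \<delta> in simp)
    have eq: "(c + \<delta>) * (n + a) - ((c + \<delta> / 2) * (n + b) + K)
        = \<delta> / 2 * n - (K + (c + \<delta> / 2) * b - (c + \<delta>) * a)" for n :: nat
      by (simp add: field_simps)
    show ?thesis by (rule eventually_mono[OF ev]) (use eq in smt)
  qed
  ultimately have "\<exists>\<^sub>F n in sequentially. (c + \<delta> / 2) * (n + b) < v (n + b)"
    by (rule frequently_eventually_frequently[THEN frequently_elim1])
       (use uv in \<open>smt (verit, best)\<close>)
  then have "\<exists>\<^sub>F n in sequentially. (c + \<delta> / 2) * n < v n"
    using frequently_sequentially_seg[of "\<lambda>n. (c + \<delta> / 2) * n < v n" b] by simp
  then show ?thesis unfolding rate_above_def by (intro exI[of _ "2 * k + 1"]) (simp only: half)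
qed

lemma rate_above_birkhoff_sum_shift:
  assumes "\<And>w. 0 \<le> g w" "\<And>w. g w \<le> 1"
  shows "rate_above c (\<lambda>n. birkhoff_sum T g n (T w)) \<longleftrightarrow> rate_above c (\<lambda>n. birkhoff_sum T g n w)"
proof -
  have step: "birkhoff_sum T g (n + 1) w = g w + birkhoff_sum T g n (T w)" for n
    using birkhoff_sum_Suc by simp
  show ?thesis
  proof
    assume "rate_above c (\<lambda>n. birkhoff_sum T g n (T w))"
    then show "rate_above c (\<lambda>n. birkhoff_sum T g n w)"
      by (rule rate_above_transfer[where a=0 and b=1 and K=0]) (use step assms in simp)
  next
    assume "rate_above c (\<lambda>n. birkhoff_sum T g n w)"
    then show "rate_above c (\<lambda>n. birkhoff_sum T g n (T w))"
      by (rule rate_above_transfer[where a=1 and b=0 and K=1]) (use step assms in simp)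
  qed
qed

locale mpt = prob_space N for N :: "'a measure" +
  fixes T :: "'a \<Rightarrow> 'a"
  assumes T_measurable [measurable]: "T \<in> measurable N N"
    and distr_T: "distr N N T = N"
begin

lemma distr_funpow: "distr N N (T ^^ m) = N"
proof (induction m)
  case (Suc m)
  have "distr N N (T ^^ Suc m) = distr (distr N N (T ^^ m)) N T"
    by (subst distr_distr) (simp_all add: comp_def)
  also have "\<dots> = N" using Suc distr_T by simp
  finally show ?case .
qed (simp add: distr_id[unfolded id_def])

lemma integral_funpow:
  fixes h :: "'a \<Rightarrow> real"
  assumes [measurable]: "h \<in> borel_measurable N"
  shows "(\<integral>w. h ((T ^^ m) w) \<partial>N) = (\<integral>w. h w \<partial>N)"
  using integral_distr[of "T ^^ m" N N h] distr_funpow by simp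

lemma integral_birkhoff_sum:
  assumes [measurable]: "g \<in> borel_measurable N" and B: "\<And>w. \<bar>g w\<bar> \<le> B"
  shows "(\<integral>w. birkhoff_sum T g n w \<partial>N) = n * (\<integral>w. g w \<partial>N)"
proof -
  have "integrable N (\<lambda>w. g ((T ^^ m) w))" for m
    by (rule integrable_const_bound[where B=B]) (simp_all add: B)
  then have "(\<integral>w. birkhoff_sum T g n w \<partial>N) = (\<Sum>m<n. \<integral>w. g ((T ^^ m) w) \<partial>N)"
    unfolding birkhoff_sum_def by (intro Bochner_Integration.integral_sum) auto
  then show ?thesis by (simp add: integral_funpow)
qed

lemma integrable_birkhoff_sum:
  assumes [measurable]: "g \<in> borel_measurable N" and B: "\<And>w. \<bar>g w\<bar> \<le> B"
  shows "integrable N (birkhoff_sum T g n)"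
proof (rule integrable_const_bound[where B="n * B"])
  have "\<bar>birkhoff_sum T g n w\<bar> \<le> (\<Sum>m<n. B)" for w
    unfolding birkhoff_sum_def by (rule order_trans[OF sum_abs sum_mono]) (rule B)
  then show "AE w in N. norm (birkhoff_sum T g n w) \<le> n * B" by simp
qed simp

text \<open>Raising \<open>g\<close> to \<open>c\<close> on \<open>Bad\<close> makes every point start a good block.\<close>
lemma birkhoff_sum_blocks_integral_bound:
  assumes [measurable]: "g \<in> borel_measurable N" "Bad \<in> sets N"
    and g: "\<And>w. 0 \<le> g w" "\<And>w. g w \<le> 1" and c: "0 \<le> c"
    and good: "\<And>w. w \<in> space N - Bad \<Longrightarrow> \<exists>k. 1 \<le> k \<and> k \<le> L \<and> c * k \<le> birkhoff_sum T g k w"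
  shows "c * (real n - real L) \<le> n * ((\<integral>w. g w \<partial>N) + c * measure N Bad)"
proof -
  define g' where "g' w = g w + c * indicator Bad w" for w
  have [measurable]: "g' \<in> borel_measurable N" unfolding g'_def by measurable
  have g'_nonneg: "0 \<le> g' w" and g'_bound: "\<bar>g' w\<bar> \<le> 1 + c" for w
    using g[of w] c by (auto simp: g'_def indicator_def)
  have "c * (real n - real L) \<le> birkhoff_sum T g' n w" if "w \<in> space N" for w
  proof (rule birkhoff_sum_ge_by_blocks[OF c g'_nonneg _ _ that])
    fix v assume v: "v \<in> space N"
    show "c \<le> g' v \<or> (\<exists>k. 1 \<le> k \<and> k \<le> L \<and> c * k \<le> birkhoff_sum T g' k v)"
    proof (cases "v \<in> Bad")
      case False
      then obtain k where "1 \<le> k" "k \<le> L" "c * k \<le> birkhoff_sum T g k v" using good v by blast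
      moreover have "birkhoff_sum T g k v \<le> birkhoff_sum T g' k v"
        by (rule birkhoff_sum_mono) (use c in \<open>simp add: g'_def\<close>)
      ultimately show ?thesis by auto
    qed (use g in \<open>simp add: g'_def\<close>)
  qed (use measurable_space[OF T_measurable] in blast)
  then have "(\<integral>w. c * (real n - real L) \<partial>N) \<le> (\<integral>w. birkhoff_sum T g' n w \<partial>N)"
    by (intro integral_mono_AE AE_I2 integrable_birkhoff_sum[OF _ g'_bound]) auto
  also have "\<dots> = n * (\<integral>w. g' w \<partial>N)" by (rule integral_birkhoff_sum[OF _ g'_bound]) simp
  also have "(\<integral>w. g' w \<partial>N) = (\<integral>w. g w \<partial>N) + c * measure N Bad"
    unfolding g'_def using g
    by (subst Bochner_Integration.integral_add) (auto intro!: integrable_const_bound[where B=1])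
  finally show ?thesis by (simp add: prob_space)
qed

lemma integral_ge_if_AE_exceeds:
  assumes [measurable]: "g \<in> borel_measurable N" and g: "\<And>w. 0 \<le> g w" "\<And>w. g w \<le> 1"
    and exceeds: "AE w in N. \<exists>n\<ge>1. c * n < birkhoff_sum T g n w"
  shows "c \<le> (\<integral>w. g w \<partial>N)"
proof (rule ccontr)
  txt \<open>Choose \<open>L\<close> such that few points fail to exceed \<open>c\<close> within \<open>L\<close> steps, then
    compare both sides of the block bound for \<open>n \<gg> L\<close>.\<close>
  define I where "I = (\<integral>w. g w \<partial>N)"
  assume "\<not> c \<le> (\<integral>w. g w \<partial>N)"
  then have I_less: "I < c" by (simp add: I_def)
  define d where "d = c - I"
  have d: "0 < d" using I_less by (simp add: d_def)
  have "0 \<le> I" unfolding I_def by (rule integral_nonneg_AE) (simp add: g)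
  then have c: "0 < c" using I_less by simp
  define E where "E L = {w \<in> space N. \<exists>k. 1 \<le> k \<and> k \<le> L \<and> c * k < birkhoff_sum T g k w}" for L
  have [measurable]: "E L \<in> sets N" for L unfolding E_def by measurable
  have "(\<lambda>L. measure N (E L)) \<longlonglongrightarrow> measure N (\<Union>L. E L)"
    by (rule finite_Lim_measure_incseq) (auto simp: incseq_def E_def)
  moreover have "measure N (\<Union>L. E L) = 1"
    using exceeds by (subst AE_in_set_eq_1[symmetric]) (auto elim!: eventually_mono simp: E_def)
  ultimately have "\<forall>\<^sub>F L in sequentially. 1 - d / (2 * c) < measure N (E L)"
    using c d by (auto intro: order_tendstoD)
  then obtain L where L: "1 - d / (2 * c) < measure N (E L)"
    by (auto simp: eventually_sequentially)
  define Bad where "Bad = space N - E L"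
  have [measurable]: "Bad \<in> sets N" by (simp add: Bad_def)
  have "measure N Bad = 1 - measure N (E L)" unfolding Bad_def by (rule prob_compl) simp
  then have "c * measure N Bad = c - c * measure N (E L)" by (simp add: right_diff_distrib)
  moreover have "c * (1 - d / (2 * c)) < c * measure N (E L)" using L c by simp
  moreover have "c * (1 - d / (2 * c)) = c - d / 2" using c by (simp add: field_simps)
  ultimately have "c * measure N Bad < d / 2" by linarith
  obtain n :: nat where n: "2 * c * L / d < n" using reals_Archimedean2 by blast
  moreover have "0 \<le> 2 * c * L / d" using c d by simp
  ultimately have n_pos: "0 < real n" by linarith
  have "c * L < n * (d / 2)" using n d by (simp add: field_simps)
  moreover have "c * (real n - real L) \<le> n * (I + c * measure N Bad)"
    unfolding I_def by (rule birkhoff_sum_blocks_integral_bound) (auto simp: Bad_def E_def g c less_imp_le)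
  moreover have "n * (c * measure N Bad) < n * (d / 2)"
    using \<open>c * measure N Bad < d / 2\<close> n_pos by simp
  ultimately have "n * c < n * c" by (simp add: d_def algebra_simps)
  then show False by simp
qed

end

locale ergodic_mpt = mpt +
  assumes invariant_trivial:
    "\<And>S. S \<in> sets N \<Longrightarrow> (\<forall>w\<in>space N. T w \<in> S \<longleftrightarrow> w \<in> S) \<Longrightarrow> measure N S = 0 \<or> measure N S = 1"
begin

lemma AE_not_rate_above:
  assumes g_meas [measurable]: "g \<in> borel_measurable N" and g: "\<And>w. 0 \<le> g w" "\<And>w. g w \<le> 1"
    and c: "(\<integral>w. g w \<partial>N) < c"
  shows "AE w in N. \<not> rate_above c (\<lambda>n. birkhoff_sum T g n w)"
proof -
  define V where "V = {w \<in> space N. rate_above c (\<lambda>n. birkhoff_sum T g n w)}"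
  have [measurable]: "V \<in> sets N"
    unfolding V_def rate_above_def frequently_sequentially by measurable
  have invariant: "\<forall>w\<in>space N. T w \<in> V \<longleftrightarrow> w \<in> V"
    using rate_above_birkhoff_sum_shift[of g, OF g] measurable_space[OF T_measurable]
    by (auto simp: V_def)
  have "measure N V \<noteq> 1"
  proof
    assume "measure N V = 1"
    then have "AE w in N. w \<in> V" by (subst AE_in_set_eq_1) simp_all
    then have exceeds: "AE w in N. \<exists>n\<ge>1. c * n < birkhoff_sum T g n w"
    proof (rule eventually_mono)
      fix w assume "w \<in> V"
      then obtain k :: nat where "\<exists>\<^sub>F n in sequentially. (c + 1 / Suc k) * n < birkhoff_sum T g n w"
        unfolding V_def rate_above_def by blast
      then obtain n where "1 \<le> n" "(c + 1 / Suc k) * n < birkhoff_sum T g n w"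
        unfolding frequently_sequentially by blast
      moreover have "c * n \<le> (c + 1 / Suc k) * n" by (simp add: algebra_simps)
      ultimately have "1 \<le> n \<and> c * n < birkhoff_sum T g n w" by linarith
      then show "\<exists>n\<ge>1. c * n < birkhoff_sum T g n w" by blast
    qed
    have "c \<le> (\<integral>w. g w \<partial>N)"
      by (rule integral_ge_if_AE_exceeds[of g c, OF g_meas g exceeds])
    then show False using c by simp
  qed
  then have "measure N V = 0" using invariant_trivial[OF _ invariant] by simp
  then have "AE w in N. w \<notin> V" by (intro AE_not_in) (simp add: null_sets_def emeasure_eq_measure)
  then show ?thesis by (rule AE_mp) (rule AE_I2, simp add: V_def)
qed

lemma AE_birkhoff_sum_le:
  assumes [measurable]: "g \<in> borel_measurable N" and g: "\<And>w. 0 \<le> g w" "\<And>w. g w \<le> 1"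
  shows "AE w in N. \<forall>e>0. \<forall>\<^sub>F n in sequentially. birkhoff_sum T g n w \<le> ((\<integral>w. g w \<partial>N) + e) * n"
proof -
  define I where "I = (\<integral>w. g w \<partial>N)"
  have "AE w in N. \<forall>j::nat. \<not> rate_above (I + 1 / Suc j) (\<lambda>n. birkhoff_sum T g n w)"
    unfolding AE_all_countable I_def by (intro allI AE_not_rate_above[OF _ g]) auto
  then show ?thesis
  proof (rule eventually_mono, intro allI impI)
    fix w and e :: real
    assume not_above: "\<forall>j::nat. \<not> rate_above (I + 1 / Suc j) (\<lambda>n. birkhoff_sum T g n w)" and e: "0 < e"
    obtain j :: nat where j: "1 / Suc j < e / 2"
      using reals_Archimedean[of "e / 2"] e by (auto simp: inverse_eq_divide)
    have "\<not> (\<exists>\<^sub>F n in sequentially. (I + 1 / Suc j + 1 / Suc j) * n < birkhoff_sum T g n w)"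
      using not_above unfolding rate_above_def by blast
    then have "\<forall>\<^sub>F n in sequentially. birkhoff_sum T g n w \<le> (I + 1 / Suc j + 1 / Suc j) * n"
      by (simp only: not_frequently not_less)
    then show "\<forall>\<^sub>F n in sequentially. birkhoff_sum T g n w \<le> ((\<integral>w. g w \<partial>N) + e) * n"
    proof (rule eventually_mono)
      fix n assume "birkhoff_sum T g n w \<le> (I + 1 / Suc j + 1 / Suc j) * n"
      also have "\<dots> \<le> (I + e) * n" using j by (intro mult_right_mono) auto
      finally show "birkhoff_sum T g n w \<le> ((\<integral>w. g w \<partial>N) + e) * n" by (simp add: I_def)
    qed
  qed
qed

text \<open>The lower bound is the upper bound for \<open>1 - g\<close>.\<close>
theorem birkhoff_ergodic:
  assumes [measurable]: "g \<in> borel_measurable N" and g: "\<And>w. 0 \<le> g w" "\<And>w. g w \<le> 1"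
  shows "AE w in N. (\<lambda>n. birkhoff_sum T g n w / n) \<longlonglongrightarrow> (\<integral>w. g w \<partial>N)"
proof -
  define I where "I = (\<integral>w. g w \<partial>N)"
  have "integrable N g" by (rule integrable_const_bound[where B=1]) (use g in \<open>auto simp: abs_le_iff\<close>)
  then have I_compl: "(\<integral>w. 1 - g w \<partial>N) = 1 - I"
    by (simp add: Bochner_Integration.integral_diff prob_space I_def)
  have compl_sum: "birkhoff_sum T (\<lambda>w. 1 - g w) n w = n - birkhoff_sum T g n w" for n w
    by (simp add: birkhoff_sum_def sum_subtractf)
  have "AE w in N. \<forall>e>0. \<forall>\<^sub>F n in sequentially. birkhoff_sum T g n w \<le> (I + e) * n"
    unfolding I_def by (rule AE_birkhoff_sum_le[OF _ g]) simp
  moreover have "AE w in N. \<forall>e>0. \<forall>\<^sub>F n in sequentially. n - birkhoff_sum T g n w \<le> (1 - I + e) * n"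
    using AE_birkhoff_sum_le[of "\<lambda>w. 1 - g w"] g by (simp add: I_compl compl_sum)
  ultimately show ?thesis
  proof (eventually_elim, intro LIMSEQ_I)
    fix w and e :: real
    assume upper: "\<forall>e>0. \<forall>\<^sub>F n in sequentially. birkhoff_sum T g n w \<le> (I + e) * n"
      and lower: "\<forall>e>0. \<forall>\<^sub>F n in sequentially. n - birkhoff_sum T g n w \<le> (1 - I + e) * n"
      and e: "0 < e"
    have e2: "0 < e / 2" using e by simp
    have "\<forall>\<^sub>F n in sequentially. norm (birkhoff_sum T g n w / n - I) < e"
      using upper[rule_format, OF e2] lower[rule_format, OF e2] eventually_gt_at_top[of 0]
    proof eventually_elim
      case (elim n)
      then have "I - e / 2 \<le> birkhoff_sum T g n w / n" "birkhoff_sum T g n w / n \<le> I + e / 2"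
        by (simp_all add: field_simps)
      then show ?case using e by (simp add: abs_less_iff)
    qed
    then show "\<exists>n0. \<forall>n\<ge>n0. norm (birkhoff_sum T g n w / n - (\<integral>w. g w \<partial>N)) < e"
      by (simp add: eventually_sequentially I_def)
  qed
qed

end

section \<open>Reversible transition kernels\<close>

lemma L2_mu_diff:
  assumes f: "L2_mu \<pi> f" and g: "L2_mu \<pi> g"
  shows "L2_mu \<pi> (\<lambda>x. f x - g x)"
proof -
  have [measurable]: "f \<in> borel_measurable borel" "g \<in> borel_measurable borel"
    using f g by (auto simp: L2_mu_def)
  have "integrable (density lborel (\<lambda>x. ennreal (\<pi> x))) (\<lambda>x. (f x - g x)^2)"
  proof (rule Bochner_Integration.integrable_bound)
    show "integrable (density lborel (\<lambda>x. ennreal (\<pi> x))) (\<lambda>x. 2 * (f x)^2 + 2 * (g x)^2)"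
      using f g by (auto simp: L2_mu_def)
    have "(f x - g x)^2 \<le> 2 * (f x)^2 + 2 * (g x)^2" for x
      using sum_squares_ge_zero[of "f x + g x" 0] by (simp add: power2_eq_square algebra_simps)
    then show "AE x in density lborel (\<lambda>x. ennreal (\<pi> x)).
        norm ((f x - g x)^2) \<le> norm (2 * (f x)^2 + 2 * (g x)^2)"
      by (intro AE_I2) simp
  qed measurable
  then show ?thesis by (simp add: L2_mu_def)
qed

lemma dirichlet_energy_nonneg:
  assumes "\<And>x y. 0 \<le> p x y"
  shows "0 \<le> dirichlet_energy p \<pi> f"
  unfolding dirichlet_energy_def using assms
  by (intro mult_nonneg_nonneg integral_nonneg_AE AE_I2 integral_nonneg_AE) auto

lemma integrable_bounded_mult:
  fixes w f :: "'a::euclidean_space \<Rightarrow> real"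
  assumes "integrable lborel w" "\<And>x. 0 \<le> w x"
    and [measurable]: "f \<in> borel_measurable borel" and f: "\<And>x. \<bar>f x\<bar> \<le> K"
  shows "integrable lborel (\<lambda>x. w x * f x)"
proof (rule Bochner_Integration.integrable_bound[where f="\<lambda>x. K * w x"])
  have "\<bar>w x * f x\<bar> \<le> K * w x" for x
  proof -
    have "\<bar>w x * f x\<bar> = w x * \<bar>f x\<bar>" using assms(2)[of x] by (simp add: abs_mult)
    also have "\<dots> \<le> w x * K" by (rule mult_left_mono[OF f assms(2)])
    finally show ?thesis by (simp add: mult.commute)
  qed
  then show "AE x in lborel. norm (w x * f x) \<le> norm (K * w x)"
    by (intro AE_I2) (metis abs_ge_self order_trans real_norm_def)
qed (use assms in simp_all)

locale reversible_kernel =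
  fixes p :: "'a::euclidean_space \<Rightarrow> 'a \<Rightarrow> real" and \<pi> :: "'a \<Rightarrow> real"
  assumes p_measurable: "(\<lambda>(x, y). p x y) \<in> borel_measurable borel"
    and p_pos: "\<And>x y. 0 < p x y"
    and p_integrable: "\<And>x. integrable lborel (\<lambda>y. p x y)"
    and p_normalized: "\<And>x. (\<integral>y. p x y \<partial>lborel) = 1"
    and pi_measurable [measurable]: "\<pi> \<in> borel_measurable borel"
    and pi_pos: "\<And>x. 0 < \<pi> x"
    and pi_integrable: "integrable lborel \<pi>"
    and reversible: "\<And>x y. p x y * \<pi> x = p y x * \<pi> y"
begin

lemma p_measurable_pair [measurable]: "(\<lambda>(x, y). p x y) \<in> borel_measurable (lborel \<Otimes>\<^sub>M lborel)"
proof -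
  have "sets (lborel \<Otimes>\<^sub>M lborel) = sets (borel :: ('a \<times> 'a) measure)"
    by (metis borel_prod sets_lborel sets_pair_measure_cong)
  then show ?thesis using p_measurable measurable_cong_sets by blast
qed

lemma detailed_balance: "\<pi> x * p x y = \<pi> y * p y x"
  using reversible[of x y] by (simp add: mult.commute)

lemma L2_mu_iff: "L2_mu \<pi> g \<longleftrightarrow> g \<in> borel_measurable borel \<and> integrable lborel (\<lambda>x. \<pi> x * (g x)^2)"
  using integrable_density[of "\<lambda>x. (g x)^2" lborel \<pi>] pi_pos by (auto simp: L2_mu_def less_imp_le)

lemma integrable_p_mult:
  "f \<in> borel_measurable borel \<Longrightarrow> (\<And>y. \<bar>f y\<bar> \<le> K) \<Longrightarrow> integrable lborel (\<lambda>y. p x y * f y)"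
  by (rule integrable_bounded_mult[OF p_integrable]) (auto intro: less_imp_le p_pos)

lemma integrable_pi_mult:
  "f \<in> borel_measurable borel \<Longrightarrow> (\<And>x. \<bar>f x\<bar> \<le> K) \<Longrightarrow> integrable lborel (\<lambda>x. \<pi> x * f x)"
  by (rule integrable_bounded_mult[OF pi_integrable]) (auto intro: less_imp_le pi_pos)

lemma L2_mu_bounded:
  assumes [measurable]: "f \<in> borel_measurable borel" and f: "\<And>x. \<bar>f x\<bar> \<le> K"
  shows "L2_mu \<pi> f"
proof -
  have "\<bar>(f x)^2\<bar> \<le> K^2" for x
    using power_mono[OF f[of x] abs_ge_zero, of 2] by simp
  then show ?thesis unfolding L2_mu_iff by (auto intro!: integrable_pi_mult[where K="K^2"])
qed

definition P :: "('a \<Rightarrow> real) \<Rightarrow> 'a \<Rightarrow> real" where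
  "P f x = (\<integral>y. p x y * f y \<partial>lborel)"

lemma P_measurable [measurable]:
  assumes [measurable]: "f \<in> borel_measurable borel"
  shows "P f \<in> borel_measurable borel"
  unfolding P_def by (rule lborel.borel_measurable_lebesgue_integral) measurable

lemma P_mono:
  assumes [measurable]: "f \<in> borel_measurable borel" "g \<in> borel_measurable borel"
    and "\<And>y. \<bar>f y\<bar> \<le> K" "\<And>y. \<bar>g y\<bar> \<le> K" "\<And>y. f y \<le> g y"
  shows "P f x \<le> P g x"
  unfolding P_def using assms p_pos
  by (intro integral_mono integrable_p_mult mult_left_mono) (auto intro: less_imp_le)

lemma P_const: "P (\<lambda>_. c) x = c"
  using p_normalized[of x] by (simp add: P_def)

lemma abs_P_le:
  assumes [measurable]: "f \<in> borel_measurable borel" and f: "\<And>y. \<bar>f y\<bar> \<le> K"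
  shows "\<bar>P f x\<bar> \<le> K"
proof -
  have K: "0 \<le> K" using f[of undefined] by linarith
  have "- K \<le> f y" "f y \<le> K" for y using f[of y] by auto
  then have "P (\<lambda>_. - K) x \<le> P f x" "P f x \<le> P (\<lambda>_. K) x"
    using f K by (auto intro!: P_mono[where K=K])
  then show ?thesis by (simp add: P_const)
qed

lemma P_nonneg:
  assumes "\<And>y. 0 \<le> f y"
  shows "0 \<le> P f x"
  unfolding P_def using p_pos assms by (intro integral_nonneg_AE AE_I2) (simp add: less_imp_le)

definition edge_integrable :: "('a \<Rightarrow> 'a \<Rightarrow> real) \<Rightarrow> bool" where
  "edge_integrable F \<longleftrightarrow> integrable (lborel \<Otimes>\<^sub>M lborel) (\<lambda>(x, y). \<pi> x * p x y * F x y)"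

text \<open>Integration against the edge measure \<open>\<pi>(x) p(x, y) dx dy\<close>, which reversibility
  makes symmetric.\<close>
definition edge_integral :: "('a \<Rightarrow> 'a \<Rightarrow> real) \<Rightarrow> real" where
  "edge_integral F = (\<integral>(x, y). \<pi> x * p x y * F x y \<partial>(lborel \<Otimes>\<^sub>M lborel))"

lemma edge_integral_iterated:
  "edge_integrable F \<Longrightarrow> edge_integral F = (\<integral>x. \<pi> x * (\<integral>y. p x y * F x y \<partial>lborel) \<partial>lborel)"
  unfolding edge_integrable_def edge_integral_def
  by (subst lborel_pair.integral_fst'[symmetric]) (simp_all add: mult.assoc)

lemma edge_integrable_swap:
  assumes "edge_integrable F"
  shows "edge_integrable (\<lambda>x y. F y x)"
proof -
  have "integrable (lborel \<Otimes>\<^sub>M lborel) (\<lambda>(x, y). \<pi> y * p y x * F y x)"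
    using lborel_pair.integrable_product_swap[OF assms[unfolded edge_integrable_def]] by simp
  then show ?thesis by (simp add: edge_integrable_def detailed_balance[of _ x for x])
qed

lemma edge_integral_swap:
  assumes "edge_integrable F"
  shows "edge_integral (\<lambda>x y. F y x) = edge_integral F"
proof -
  have "edge_integral (\<lambda>x y. F y x) = (\<integral>(x, y). \<pi> y * p y x * F y x \<partial>(lborel \<Otimes>\<^sub>M lborel))"
    by (simp add: edge_integral_def detailed_balance[of _ x for x])
  also have "\<dots> = edge_integral F"
    using lborel_pair.integral_product_swap[OF borel_measurable_integrable[OF assms[unfolded edge_integrable_def]]]
    by (simp add: edge_integral_def)
  finally show ?thesis .
qed

lemma edge_integrable_add:
  "edge_integrable F \<Longrightarrow> edge_integrable G \<Longrightarrow> edge_integrable (\<lambda>x y. F x y + G x y)"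
  unfolding edge_integrable_def case_prod_beta distrib_left by (rule Bochner_Integration.integrable_add)

lemma edge_integrable_diff:
  "edge_integrable F \<Longrightarrow> edge_integrable G \<Longrightarrow> edge_integrable (\<lambda>x y. F x y - G x y)"
  unfolding edge_integrable_def case_prod_beta right_diff_distrib by (rule Bochner_Integration.integrable_diff)

lemma edge_integrable_cmult:
  assumes "edge_integrable F"
  shows "edge_integrable (\<lambda>x y. c * F x y)"
proof -
  have "(\<lambda>(x, y). \<pi> x * p x y * (c * F x y)) = (\<lambda>z. c * (case z of (x, y) \<Rightarrow> \<pi> x * p x y * F x y))"
    by (auto simp: fun_eq_iff)
  then show ?thesis using assms by (simp add: edge_integrable_def)
qed

lemma edge_integral_add:
  "edge_integrable F \<Longrightarrow> edge_integrable G \<Longrightarrow>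
    edge_integral (\<lambda>x y. F x y + G x y) = edge_integral F + edge_integral G"
  unfolding edge_integrable_def edge_integral_def case_prod_beta distrib_left
  by (rule Bochner_Integration.integral_add)

lemma edge_integral_diff:
  "edge_integrable F \<Longrightarrow> edge_integrable G \<Longrightarrow>
    edge_integral (\<lambda>x y. F x y - G x y) = edge_integral F - edge_integral G"
  unfolding edge_integrable_def edge_integral_def case_prod_beta right_diff_distrib
  by (rule Bochner_Integration.integral_diff)

lemma edge_integral_cmult: "edge_integral (\<lambda>x y. c * F x y) = c * edge_integral F"
  unfolding edge_integral_def case_prod_beta by (simp add: mult_ac)

lemma edge_integrable_bound:
  assumes "edge_integrable H" and G: "\<And>x y. \<bar>G x y\<bar> \<le> H x y"
    and [measurable]: "(\<lambda>(x, y). G x y) \<in> borel_measurable (lborel \<Otimes>\<^sub>M lborel)"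
  shows "edge_integrable G"
  unfolding edge_integrable_def
proof (rule Bochner_Integration.integrable_bound)
  have "\<bar>\<pi> x * p x y * G x y\<bar> \<le> \<bar>\<pi> x * p x y * H x y\<bar>" for x y
  proof -
    have "\<bar>\<pi> x * p x y * G x y\<bar> \<le> \<pi> x * p x y * H x y"
      using pi_pos[of x] p_pos[of x y] G[of x y] by (simp add: abs_mult mult_left_mono)
    then show ?thesis by linarith
  qed
  then show "AE z in lborel \<Otimes>\<^sub>M lborel.
      norm (case z of (x, y) \<Rightarrow> \<pi> x * p x y * G x y) \<le> norm (case z of (x, y) \<Rightarrow> \<pi> x * p x y * H x y)"
    by (intro AE_I2) (auto simp: case_prod_beta)
qed (use assms(1) in \<open>simp_all add: edge_integrable_def\<close>)

lemma edge_integrable_fst: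
  assumes [measurable]: "w \<in> borel_measurable borel" and w: "integrable lborel (\<lambda>x. \<pi> x * w x)"
    and w_nonneg: "\<And>x. 0 \<le> w x"
  shows "edge_integrable (\<lambda>x y. w x)"
  unfolding edge_integrable_def
proof (rule lborel_pair.Fubini_integrable)
  have "(\<integral>y. norm (\<pi> x * p x y * w x) \<partial>lborel) = (\<integral>y. (\<pi> x * w x) * p x y \<partial>lborel)" for x
    using pi_pos[of x] w_nonneg[of x] by (simp add: abs_mult abs_of_pos p_pos mult_ac)
  then show "integrable lborel (\<lambda>x. \<integral>y. norm (case (x, y) of (x, y) \<Rightarrow> \<pi> x * p x y * w x) \<partial>lborel)"
    using w by (simp add: p_normalized)
qed (use p_integrable in simp_all)

lemma edge_integrable_bounded:
  assumes "(\<lambda>(x, y). G x y) \<in> borel_measurable (lborel \<Otimes>\<^sub>M lborel)" and G: "\<And>x y. \<bar>G x y\<bar> \<le> K"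
  shows "edge_integrable G"
proof (rule edge_integrable_bound[OF edge_integrable_fst[of "\<lambda>_. K"] G assms(1)])
  show "0 \<le> K" using G[of undefined undefined] by linarith
qed (use pi_integrable in \<open>simp_all add: mult.commute\<close>)

lemma edge_integrable_mult_fst:
  assumes [measurable]: "(\<lambda>(x, y). G x y) \<in> borel_measurable (lborel \<Otimes>\<^sub>M lborel)"
    and G: "\<And>x y. \<bar>G x y\<bar> \<le> K" and h: "L2_mu \<pi> h"
  shows "edge_integrable (\<lambda>x y. G x y * h x)"
proof -
  have [measurable]: "h \<in> borel_measurable borel" using h by (simp add: L2_mu_iff)
  have K: "0 \<le> K" using G[of undefined undefined] by linarith
  have "edge_integrable (\<lambda>x y. K + K * (h x)^2)"
    using h pi_integrable K by (intro edge_integrable_fst) (simp_all add: L2_mu_iff distrib_left mult_ac)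
  moreover have "\<bar>G x y * h x\<bar> \<le> K + K * (h x)^2" for x y
  proof -
    have "\<bar>h x\<bar> \<le> 1 + (h x)^2"
      using sum_squares_ge_zero[of "\<bar>h x\<bar> - 1" 0] by (simp add: power2_eq_square algebra_simps)
    then have "\<bar>G x y\<bar> * \<bar>h x\<bar> \<le> K * (1 + (h x)^2)"
      using G[of x y] by (intro mult_mono) auto
    then show ?thesis by (simp add: abs_mult algebra_simps)
  qed
  ultimately show ?thesis by (rule edge_integrable_bound) measurable
qed

lemma edge_integrable_mult_snd:
  assumes [measurable]: "(\<lambda>(x, y). G x y) \<in> borel_measurable (lborel \<Otimes>\<^sub>M lborel)"
    and G: "\<And>x y. \<bar>G x y\<bar> \<le> K" and h: "L2_mu \<pi> h"
  shows "edge_integrable (\<lambda>x y. G x y * h y)"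
proof -
  have "(\<lambda>(x, y). G y x) \<in> borel_measurable (lborel \<Otimes>\<^sub>M lborel)"
    using measurable_pair_swap[OF assms(1)] by (simp add: case_prod_beta)
  then have "edge_integrable (\<lambda>x y. G y x * h x)" using G h by (intro edge_integrable_mult_fst) auto
  then show ?thesis by (rule edge_integrable_swap[of "\<lambda>x y. G y x * h x", simplified])
qed

lemma edge_integrable_sq_diff:
  assumes g: "L2_mu \<pi> g"
  shows "edge_integrable (\<lambda>x y. (g y - g x)^2)"
proof (rule edge_integrable_bound)
  have [measurable]: "g \<in> borel_measurable borel" using g by (simp add: L2_mu_iff)
  have "integrable lborel (\<lambda>x. 2 * (\<pi> x * (g x)^2))"
    using g unfolding L2_mu_iff by (intro integrable_mult_right) simp
  then have "integrable lborel (\<lambda>x. \<pi> x * (2 * (g x)^2))" by (simp add: mult_ac)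
  then have "edge_integrable (\<lambda>x y. 2 * (g x)^2)" by (intro edge_integrable_fst) auto
  then show "edge_integrable (\<lambda>x y. 2 * (g x)^2 + 2 * (g y)^2)"
    using edge_integrable_swap by (intro edge_integrable_add) auto
  show "(\<lambda>(x, y). (g y - g x)^2) \<in> borel_measurable (lborel \<Otimes>\<^sub>M lborel)" by measurable
  show "\<bar>(g y - g x)^2\<bar> \<le> 2 * (g x)^2 + 2 * (g y)^2" for x y
  proof -
    have "(g y - g x)^2 \<le> 2 * (g x)^2 + 2 * (g y)^2"
      using sum_squares_ge_zero[of "g x + g y" 0] by (simp add: power2_eq_square algebra_simps)
    then show ?thesis by simp
  qed
qed

lemma integral_pi_P:
  assumes [measurable]: "f \<in> borel_measurable borel" and f: "\<And>x. \<bar>f x\<bar> \<le> K"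
  shows "(\<integral>x. \<pi> x * P f x \<partial>lborel) = (\<integral>x. \<pi> x * f x \<partial>lborel)"
proof -
  have int: "edge_integrable (\<lambda>x y. f x)" by (rule edge_integrable_bounded[where K=K]) (simp_all add: f)
  have "(\<integral>x. \<pi> x * P f x \<partial>lborel) = edge_integral (\<lambda>x y. f y)"
    using edge_integral_iterated[OF edge_integrable_swap[OF int]] by (simp add: P_def)
  also have "\<dots> = edge_integral (\<lambda>x y. f x)" by (rule edge_integral_swap[OF int])
  also have "\<dots> = (\<integral>x. \<pi> x * f x \<partial>lborel)"
    using edge_integral_iterated[OF int] by (simp add: p_normalized)
  finally show ?thesis .
qed

lemma dirichlet_energy_eq_edge_integral:
  assumes g: "L2_mu \<pi> g"
  shows "dirichlet_energy p \<pi> g = edge_integral (\<lambda>x y. (g y - g x)^2) / 2"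
proof -
  have [measurable]: "g \<in> borel_measurable borel" using g by (simp add: L2_mu_iff)
  have [measurable]: "(\<lambda>x. \<integral>y. (g y - g x)^2 * p x y \<partial>lborel) \<in> borel_measurable borel"
    by (rule lborel.borel_measurable_lebesgue_integral) measurable
  have "(\<integral>x. (\<integral>y. (g y - g x)^2 * p x y \<partial>lborel) \<partial>density lborel (\<lambda>x. ennreal (\<pi> x)))
      = (\<integral>x. \<pi> x * (\<integral>y. p x y * (g y - g x)^2 \<partial>lborel) \<partial>lborel)"
    using pi_pos by (subst integral_density) (simp_all add: less_imp_le mult.commute)
  also have "\<dots> = edge_integral (\<lambda>x y. (g y - g x)^2)"
    using edge_integral_iterated[OF edge_integrable_sq_diff[OF g]] by simp
  finally show ?thesis by (simp add: dirichlet_energy_def)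
qed

text \<open>Green's formula: reversibility makes \<open>P\<close> self-adjoint, so the Dirichlet form of
  \<open>u\<close> and \<open>v\<close> is \<open>\<langle>v, (I - P) u\<rangle>\<close> in \<open>L\<^sup>2(\<mu>)\<close>.\<close>
lemma edge_integral_green:
  assumes [measurable]: "u \<in> borel_measurable borel" and u: "\<And>x. \<bar>u x\<bar> \<le> K" and v: "L2_mu \<pi> v"
  shows "edge_integral (\<lambda>x y. (u y - u x) * (v y - v x)) = 2 * (\<integral>x. \<pi> x * v x * (u x - P u x) \<partial>lborel)"
proof -
  have diff_bound: "\<bar>u y - u x\<bar> \<le> 2 * K" for x y using u[of x] u[of y] by linarith
  have "(\<lambda>(x, y). u y - u x) \<in> borel_measurable (lborel \<Otimes>\<^sub>M lborel)" by measurable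
  note diff = this diff_bound
  have int_fst: "edge_integrable (\<lambda>x y. (u y - u x) * v x)"
    using edge_integrable_mult_fst[OF diff v] by simp
  have int_snd: "edge_integrable (\<lambda>x y. (u y - u x) * v y)"
    using edge_integrable_mult_snd[OF diff v] by simp
  have inner: "(\<integral>y. p x y * ((u y - u x) * v x) \<partial>lborel) = v x * (P u x - u x)" for x
  proof -
    have "(\<integral>y. p x y * ((u y - u x) * v x) \<partial>lborel)
        = (\<integral>y. v x * (p x y * u y) - v x * u x * p x y \<partial>lborel)"
      by (simp add: algebra_simps)
    also have "\<dots> = v x * P u x - v x * u x"
      using integrable_p_mult[OF _ u] p_integrable
      by (simp add: Bochner_Integration.integral_diff P_def p_normalized)
    finally show ?thesis by (simp add: algebra_simps)
  qed
  have fst: "edge_integral (\<lambda>x y. (u y - u x) * v x) = (\<integral>x. \<pi> x * v x * (P u x - u x) \<partial>lborel)"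
    using edge_integral_iterated[OF int_fst] by (simp add: inner mult.assoc)
  have "edge_integral (\<lambda>x y. (u y - u x) * v y) = edge_integral (\<lambda>x y. - 1 * ((u x - u y) * v y))"
    by (simp add: algebra_simps)
  also have "\<dots> = - edge_integral (\<lambda>x y. (u x - u y) * v y)"
    by (simp only: edge_integral_cmult)
  also have "edge_integral (\<lambda>x y. (u x - u y) * v y) = edge_integral (\<lambda>x y. (u y - u x) * v x)"
    using edge_integral_swap[OF int_fst] .
  finally have snd: "edge_integral (\<lambda>x y. (u y - u x) * v y) = - edge_integral (\<lambda>x y. (u y - u x) * v x)" .
  have "edge_integral (\<lambda>x y. (u y - u x) * (v y - v x))
      = edge_integral (\<lambda>x y. (u y - u x) * v y) - edge_integral (\<lambda>x y. (u y - u x) * v x)"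
    using edge_integral_diff[OF int_snd int_fst] by (simp add: right_diff_distrib)
  also have "\<dots> = - 2 * (\<integral>x. \<pi> x * v x * (P u x - u x) \<partial>lborel)"
    by (simp add: snd fst)
  also have "\<dots> = 2 * (\<integral>x. \<pi> x * v x * (u x - P u x) \<partial>lborel)"
    by (simp add: algebra_simps flip: Bochner_Integration.integral_minus)
  finally show ?thesis .
qed

lemma edge_integrable_gradient_product:
  assumes [measurable]: "u \<in> borel_measurable borel" and u: "\<And>x. \<bar>u x\<bar> \<le> K" and v: "L2_mu \<pi> v"
  shows "edge_integrable (\<lambda>x y. (u y - u x) * (v y - v x))"
proof -
  have "\<bar>u y - u x\<bar> \<le> 2 * K" for x y using u[of x] u[of y] by linarith
  moreover have "(\<lambda>(x, y). u y - u x) \<in> borel_measurable (lborel \<Otimes>\<^sub>M lborel)" by measurable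
  ultimately have "edge_integrable (\<lambda>x y. (u y - u x) * v y - (u y - u x) * v x)"
    using v by (intro edge_integrable_diff edge_integrable_mult_fst edge_integrable_mult_snd) auto
  then show ?thesis by (simp add: right_diff_distrib)
qed

lemma path_int_Cons_eq_P: "path_int p (S # Ss) x = P (\<lambda>y. indicator S y * path_int p Ss y) x"
  by (simp add: P_def mult_ac)

lemma path_int_measurable [measurable]:
  "set Ss \<subseteq> sets borel \<Longrightarrow> path_int p Ss \<in> borel_measurable borel"
proof (induction Ss)
  case (Cons S Ss)
  then have [measurable]: "S \<in> sets borel" "path_int p Ss \<in> borel_measurable borel" by auto
  show ?case unfolding path_int_Cons_eq_P[abs_def] by measurable
next
  case Nil
  have "path_int p [] = (\<lambda>_. 1)" by auto
  then show ?case by simp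
qed

lemma abs_path_int_le_1: "set Ss \<subseteq> sets borel \<Longrightarrow> \<bar>path_int p Ss x\<bar> \<le> 1"
proof (induction Ss arbitrary: x)
  case (Cons S Ss)
  then have [measurable]: "S \<in> sets borel" "path_int p Ss \<in> borel_measurable borel" by auto
  have "\<bar>indicator S y * path_int p Ss y\<bar> \<le> 1" for y
    using Cons by (auto simp: indicator_def)
  then show ?case unfolding path_int_Cons_eq_P by (intro abs_P_le) simp_all
qed simp

end

section \<open>The committor\<close>

locale reactive_sets = reversible_kernel +
  fixes A B :: "'a set"
  assumes A_borel [measurable]: "A \<in> sets borel" and B_borel [measurable]: "B \<in> sets borel"
    and disjoint: "A \<inter> B = {}"
begin

abbreviation q :: "'a \<Rightarrow> real" where
  "q \<equiv> committor p A B"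

lemma hit_before_Suc_eq_P:
  "hit_before p A B (Suc n) x = (if x \<in> B then 1 else if x \<in> A then 0 else P (hit_before p A B n) x)"
  by (simp add: P_def)

lemma hit_before_measurable [measurable]: "hit_before p A B n \<in> borel_measurable borel"
proof (induction n)
  case (Suc n)
  note Suc [measurable]
  show ?case unfolding hit_before_Suc_eq_P by measurable
qed simp

lemma hit_before_bounds: "0 \<le> hit_before p A B n x \<and> hit_before p A B n x \<le> 1"
proof (induction n arbitrary: x)
  case (Suc n)
  have "\<bar>hit_before p A B n y\<bar> \<le> 1" for y using Suc[of y] by simp
  then have "\<bar>P (hit_before p A B n) x\<bar> \<le> 1" by (intro abs_P_le) simp_all
  moreover have "0 \<le> P (hit_before p A B n) x" using Suc by (intro P_nonneg) simp
  ultimately show ?case unfolding hit_before_Suc_eq_P by auto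
qed simp

lemma abs_hit_before_le_1: "\<bar>hit_before p A B n x\<bar> \<le> 1"
  using hit_before_bounds[of n x] by simp

lemma hit_before_mono: "hit_before p A B n x \<le> hit_before p A B (Suc n) x"
proof (induction n arbitrary: x)
  case 0
  have "0 \<le> P (hit_before p A B 0) x" by (rule P_nonneg) simp
  then show ?case by (simp only: hit_before_Suc_eq_P) auto
next
  case (Suc n)
  have "P (hit_before p A B n) x \<le> P (hit_before p A B (Suc n)) x"
    by (rule P_mono[where K=1]) (simp_all add: abs_hit_before_le_1 Suc del: hit_before.simps)
  then show ?case by (simp only: hit_before_Suc_eq_P) auto
qed

lemma hit_before_tendsto_committor: "(\<lambda>n. hit_before p A B n x) \<longlonglongrightarrow> q x"
proof -
  have "convergent (\<lambda>n. hit_before p A B n x)"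
    using hit_before_bounds by (intro Bseq_monoseq_convergent BseqI'[where K=1] incseq_imp_monoseq
        incseq_SucI hit_before_mono) (auto simp: abs_hit_before_le_1)
  then show ?thesis unfolding committor_def by (rule convergent_LIMSEQ_iff[THEN iffD1])
qed

lemma committor_bounds: "0 \<le> q x \<and> q x \<le> 1"
  using LIMSEQ_le_const[OF hit_before_tendsto_committor] LIMSEQ_le_const2[OF hit_before_tendsto_committor]
    hit_before_bounds by blast

lemma abs_committor_le_1: "\<bar>q x\<bar> \<le> 1"
  using committor_bounds[of x] by simp

lemma committor_measurable [measurable]: "q \<in> borel_measurable borel"
  by (rule borel_measurable_LIMSEQ_real[OF hit_before_tendsto_committor hit_before_measurable])

lemma committor_A:
  assumes "x \<in> A"
  shows "q x = 0"
proof -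
  have "hit_before p A B n x = 0" for n using assms disjoint by (cases n) auto
  then show ?thesis using LIMSEQ_unique[OF hit_before_tendsto_committor, of x 0] by simp
qed

lemma committor_B:
  assumes "x \<in> B"
  shows "q x = 1"
proof -
  have "hit_before p A B n x = 1" for n using assms by (cases n) auto
  then show ?thesis using LIMSEQ_unique[OF hit_before_tendsto_committor, of x 1] by simp
qed

lemma P_hit_before_tendsto: "(\<lambda>n. P (hit_before p A B n) x) \<longlonglongrightarrow> P q x"
  unfolding P_def
proof (rule integral_dominated_convergence[where w="\<lambda>y. p x y"])
  show "AE y in lborel. (\<lambda>n. p x y * hit_before p A B n y) \<longlonglongrightarrow> p x y * q y"
    by (intro AE_I2 tendsto_mult tendsto_const hit_before_tendsto_committor)
  show "AE y in lborel. norm (p x y * hit_before p A B n y) \<le> p x y" for n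
    using p_pos[of x] abs_hit_before_le_1[of n]
    by (intro AE_I2) (simp add: abs_mult mult_left_le less_imp_le)
qed (simp_all add: p_integrable)

lemma committor_harmonic:
  assumes "x \<notin> A" "x \<notin> B"
  shows "P q x = q x"
proof -
  have "(\<lambda>n. hit_before p A B (Suc n) x) \<longlonglongrightarrow> P q x"
    using P_hit_before_tendsto[of x] assms by (simp add: P_def)
  then show ?thesis by (rule LIMSEQ_unique[OF _ LIMSEQ_Suc[OF hit_before_tendsto_committor]])
qed

lemma committor_in_F_AB: "q \<in> F_AB \<pi> A B"
  unfolding F_AB_def using L2_mu_bounded[OF committor_measurable abs_committor_le_1]
  by (simp add: committor_A committor_B)

text \<open>Pointwise, \<open>q (q - P q) = (q - P q) + 1\<^sub>A P q\<close> (check on \<open>A\<close>, on \<open>B\<close> and where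
  \<open>q\<close> is harmonic); the first term has \<open>\<mu>\<close>-mean zero by invariance.\<close>
lemma dirichlet_energy_committor:
  "dirichlet_energy p \<pi> q = (\<integral>x. indicator A x * \<pi> x * P q x \<partial>lborel)"
proof -
  have L2_q: "L2_mu \<pi> q" by (rule L2_mu_bounded[OF committor_measurable abs_committor_le_1])
  have abs_P_q: "\<bar>P q x\<bar> \<le> 1" for x by (rule abs_P_le[OF committor_measurable abs_committor_le_1])
  have "dirichlet_energy p \<pi> q = edge_integral (\<lambda>x y. (q y - q x) * (q y - q x)) / 2"
    by (simp add: dirichlet_energy_eq_edge_integral[OF L2_q] power2_eq_square)
  also have "\<dots> = (\<integral>x. \<pi> x * q x * (q x - P q x) \<partial>lborel)"
    by (simp add: edge_integral_green[OF committor_measurable abs_committor_le_1 L2_q])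
  also have "\<dots> = (\<integral>x. (\<pi> x * q x - \<pi> x * P q x) + indicator A x * \<pi> x * P q x \<partial>lborel)"
  proof (rule Bochner_Integration.integral_cong[OF refl])
    fix x
    show "\<pi> x * q x * (q x - P q x) = (\<pi> x * q x - \<pi> x * P q x) + indicator A x * \<pi> x * P q x"
      using disjoint committor_A[of x] committor_B[of x] committor_harmonic[of x]
      by (cases "x \<in> A"; cases "x \<in> B") (auto simp: algebra_simps)
  qed
  also have "\<dots> = ((\<integral>x. \<pi> x * q x \<partial>lborel) - (\<integral>x. \<pi> x * P q x \<partial>lborel))
      + (\<integral>x. indicator A x * \<pi> x * P q x \<partial>lborel)"
  proof -
    have "integrable lborel (\<lambda>x. \<pi> x * q x)" "integrable lborel (\<lambda>x. \<pi> x * P q x)"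
      "integrable lborel (\<lambda>x. \<pi> x * (indicator A x * P q x))"
      using abs_committor_le_1 abs_P_q
      by (auto intro!: integrable_pi_mult[where K=1] simp: indicator_def)
    then show ?thesis by (simp add: Bochner_Integration.integral_diff mult_ac)
  qed
  also have "\<dots> = (\<integral>x. indicator A x * \<pi> x * P q x \<partial>lborel)"
    using integral_pi_P[OF committor_measurable abs_committor_le_1] by simp
  finally show ?thesis .
qed

text \<open>The cross term of \<open>\<E>(q + (f - q))\<close> is \<open>\<langle>f - q, (I - P) q\<rangle>\<close>, which vanishes because
  \<open>f - q = 0\<close> on \<open>A \<union> B\<close> and \<open>(I - P) q = 0\<close> off it.\<close>
lemma dirichlet_energy_decomposition:
  assumes f: "f \<in> F_AB \<pi> A B"
  shows "dirichlet_energy p \<pi> f = dirichlet_energy p \<pi> q + dirichlet_energy p \<pi> (\<lambda>x. f x - q x)"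
proof -
  define d where "d x = f x - q x" for x
  have L2_q: "L2_mu \<pi> q" by (rule L2_mu_bounded[OF committor_measurable abs_committor_le_1])
  have L2_f: "L2_mu \<pi> f" using f by (simp add: F_AB_def)
  have L2_d: "L2_mu \<pi> d" unfolding d_def by (rule L2_mu_diff[OF L2_f L2_q])
  have d_zero: "d x = 0" if "x \<in> A \<union> B" for x
    using that f committor_A committor_B by (auto simp: d_def F_AB_def)
  have cross: "edge_integral (\<lambda>x y. (q y - q x) * (d y - d x)) = 0"
  proof -
    have pointwise: "\<pi> x * d x * (q x - P q x) = 0" for x
      using d_zero[of x] committor_harmonic[of x] by (cases "x \<in> A \<union> B") auto
    show ?thesis
      by (simp only: edge_integral_green[OF committor_measurable abs_committor_le_1 L2_d] pointwise) simp
  qed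
  have "(f y - f x)^2 = ((q y - q x)^2 + (d y - d x)^2) + 2 * ((q y - q x) * (d y - d x))" for x y
    by (simp add: d_def power2_eq_square algebra_simps)
  then have "edge_integral (\<lambda>x y. (f y - f x)^2)
      = edge_integral (\<lambda>x y. (q y - q x)^2) + edge_integral (\<lambda>x y. (d y - d x)^2)"
    using edge_integrable_sq_diff[OF L2_q] edge_integrable_sq_diff[OF L2_d]
      edge_integrable_gradient_product[OF committor_measurable abs_committor_le_1 L2_d]
    by (simp add: edge_integral_add edge_integrable_add edge_integrable_cmult edge_integral_cmult cross)
  then show ?thesis
    by (simp add: dirichlet_energy_eq_edge_integral L2_f L2_q L2_d add_divide_distrib flip: d_def)
qed

lemma P_hit_before_eq_path_int_sum:
  "P (hit_before p A B n) x = (\<Sum>j<Suc n. path_int p (replicate j (- (A \<union> B)) @ [B]) x)"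
proof (induction n arbitrary: x)
  case 0
  show ?case by (simp add: P_def indicator_def of_bool_def mult_ac)
next
  case (Suc n)
  let ?C = "- (A \<union> B)" and ?path = "\<lambda>j. path_int p (replicate j (- (A \<union> B)) @ [B])"
  have sets: "set (replicate j ?C @ [B]) \<subseteq> sets borel" for j by auto
  have step: "hit_before p A B (Suc n) y = indicator B y + indicator ?C y * P (hit_before p A B n) y" for y
    using disjoint by (auto simp: hit_before_Suc_eq_P indicator_def simp del: hit_before.simps)
  have "p x y * hit_before p A B (Suc n) y
      = p x y * indicator B y + (\<Sum>j<Suc n. p x y * (indicator ?C y * ?path j y))" for y
    by (simp only: step Suc sum_distrib_left distrib_left)
  moreover have "integrable lborel (\<lambda>y. p x y * indicator B y)"
    by (rule integrable_p_mult[where K=1]) auto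
  moreover have "integrable lborel (\<lambda>y. p x y * (indicator ?C y * ?path j y))" for j
    using abs_path_int_le_1[OF sets, of j] path_int_measurable[OF sets, of j]
    by (intro integrable_p_mult[where K=1]) (auto simp: indicator_def)
  ultimately have "P (hit_before p A B (Suc n)) x
      = (\<integral>y. p x y * indicator B y \<partial>lborel) + (\<Sum>j<Suc n. \<integral>y. p x y * (indicator ?C y * ?path j y) \<partial>lborel)"
    by (simp only: P_def) (simp add: Bochner_Integration.integral_add Bochner_Integration.integral_sum)
  also have "\<dots> = ?path 0 x + (\<Sum>j<Suc n. ?path (Suc j) x)"
    by (simp add: mult_ac)
  finally show ?case by (simp only: sum.lessThan_Suc_shift)
qed

end

section \<open>The rate of reactive trajectories\<close>

locale stationary_chain = reversible_kernel p \<pi> for p :: "'a::euclidean_space \<Rightarrow> 'a \<Rightarrow> real" and \<pi> +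
  fixes M :: "'w measure" and X :: "nat \<Rightarrow> 'w \<Rightarrow> 'a"
  assumes M_prob: "prob_space M"
    and X_measurable [measurable]: "\<And>n. X n \<in> borel_measurable M"
    and X_law: "\<And>S0 Ss. S0 \<in> sets borel \<Longrightarrow> set Ss \<subseteq> sets borel \<Longrightarrow>
         measure M {\<omega>\<in>space M. X 0 \<omega> \<in> S0 \<and> (\<forall>i<length Ss. X (Suc i) \<omega> \<in> Ss ! i)}
           = (\<integral>x. indicator S0 x * \<pi> x * path_int p Ss x \<partial>lborel)"
    and ergodic: "\<And>S. S \<in> sets (Pi\<^sub>M UNIV (\<lambda>_. borel :: 'a measure)) \<Longrightarrow>
         (\<forall>f. f \<in> S \<longleftrightarrow> (\<lambda>n. f (Suc n)) \<in> S) \<Longrightarrow>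
         measure M {\<omega>\<in>space M. (\<lambda>n. X n \<omega>) \<in> S} \<in> {0, 1}"
begin

abbreviation \<Omega> :: "(nat \<Rightarrow> 'a) measure" where
  "\<Omega> \<equiv> Pi\<^sub>M UNIV (\<lambda>_. borel)"

definition path :: "'w \<Rightarrow> nat \<Rightarrow> 'a" where
  "path \<omega> n = X n \<omega>"

definition shift :: "(nat \<Rightarrow> 'a) \<Rightarrow> nat \<Rightarrow> 'a" where
  "shift f n = f (Suc n)"

definition path_law :: "(nat \<Rightarrow> 'a) measure" where
  "path_law = distr M \<Omega> path"

lemma path_measurable [measurable]: "path \<in> measurable M \<Omega>"
  unfolding path_def[abs_def] by (rule measurable_PiM_single') simp_all

lemma shift_measurable [measurable]: "shift \<in> measurable \<Omega> \<Omega>"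
  unfolding shift_def[abs_def] by (rule measurable_PiM_single') simp_all

lemma sets_path_law [simp, measurable_cong]: "sets path_law = sets \<Omega>"
  by (simp add: path_law_def)

lemma space_path_law [simp]: "space path_law = UNIV"
  by (simp add: path_law_def space_PiM)

lemma prob_space_path_law: "prob_space path_law"
  unfolding path_law_def by (rule prob_space.prob_space_distr[OF M_prob path_measurable])

lemma measure_path_law: "S \<in> sets \<Omega> \<Longrightarrow> measure path_law S = measure M {\<omega>\<in>space M. path \<omega> \<in> S}"
  unfolding path_law_def by (subst measure_distr) (auto intro!: arg_cong[where f="measure M"])

text \<open>One step of the stationarity argument: prepending an unconstrained first step to a
  prefix event costs a factor \<open>P\<close>, which the invariance of \<open>\<mu>\<close> absorbs.\<close>
lemma measure_shifted_prefix:
  assumes F: "\<And>i. F i \<in> sets borel"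
  shows "measure M {\<omega>\<in>space M. \<forall>i<n. X (Suc i) \<omega> \<in> F i} = measure M {\<omega>\<in>space M. \<forall>i<n. X i \<omega> \<in> F i}"
proof (cases n)
  case (Suc m)
  define Ss where "Ss = map (\<lambda>i. F (Suc i)) [0..<m]"
  have Ss: "set Ss \<subseteq> sets borel" "set (F 0 # Ss) \<subseteq> sets borel" using F by (auto simp: Ss_def)
  have [measurable]: "path_int p Ss \<in> borel_measurable borel" "F 0 \<in> sets borel"
    using path_int_measurable[OF Ss(1)] F by simp_all
  have bound: "\<bar>indicator (F 0) y * path_int p Ss y\<bar> \<le> 1" for y
    using abs_path_int_le_1[OF Ss(1)] by (simp add: indicator_def)
  have "measure M {\<omega>\<in>space M. \<forall>i<n. X (Suc i) \<omega> \<in> F i}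
      = measure M {\<omega>\<in>space M. X 0 \<omega> \<in> UNIV \<and> (\<forall>i<length (F 0 # Ss). X (Suc i) \<omega> \<in> (F 0 # Ss) ! i)}"
    by (simp add: Suc Ss_def All_less_Suc2 nth_Cons')
  also have "\<dots> = (\<integral>x. \<pi> x * P (\<lambda>y. indicator (F 0) y * path_int p Ss y) x \<partial>lborel)"
    using Ss by (subst X_law) (simp_all add: path_int_Cons_eq_P del: path_int.simps)
  also have "\<dots> = (\<integral>x. indicator (F 0) x * \<pi> x * path_int p Ss x \<partial>lborel)"
    by (subst integral_pi_P[OF _ bound]) (simp_all add: mult_ac)
  also have "\<dots> = measure M {\<omega>\<in>space M. X 0 \<omega> \<in> F 0 \<and> (\<forall>i<length Ss. X (Suc i) \<omega> \<in> Ss ! i)}"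
    using Ss F by (subst X_law) simp_all
  also have "\<dots> = measure M {\<omega>\<in>space M. \<forall>i<n. X i \<omega> \<in> F i}"
    by (simp add: Suc Ss_def All_less_Suc2)
  finally show ?thesis .
qed simp

lemma measure_shifted_cylinder:
  assumes J: "finite J" and As: "\<And>i. i \<in> J \<Longrightarrow> As i \<in> sets borel"
  shows "measure M {\<omega>\<in>space M. \<forall>i\<in>J. X (Suc i) \<omega> \<in> As i} = measure M {\<omega>\<in>space M. \<forall>i\<in>J. X i \<omega> \<in> As i}"
proof -
  obtain n where n: "J \<subseteq> {..<n}" using finite_nat_bounded[OF J] by blast
  define F where "F i = (if i \<in> J then As i else UNIV)" for i
  have F: "F i \<in> sets borel" for i using As by (simp add: F_def)
  have "(\<forall>i\<in>J. Y i \<in> As i) \<longleftrightarrow> (\<forall>i<n. Y i \<in> F i)" for Y :: "nat \<Rightarrow> 'a"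
    using n by (auto simp: F_def)
  then show ?thesis using measure_shifted_prefix[OF F] by simp
qed

lemma emeasure_distr_cylinder:
  assumes [measurable]: "g \<in> measurable M \<Omega>" and J: "finite J" and As: "\<And>i. i \<in> J \<Longrightarrow> As i \<in> sets borel"
  shows "emeasure (distr M \<Omega> g) (prod_emb UNIV (\<lambda>_. borel) J (Pi\<^sub>E J As))
    = emeasure M {\<omega>\<in>space M. \<forall>i\<in>J. g \<omega> i \<in> As i}"
proof -
  have "prod_emb UNIV (\<lambda>_. borel) J (Pi\<^sub>E J As) \<in> sets \<Omega>"
    using J As by (intro sets_PiM_I) auto
  then show ?thesis
    by (subst emeasure_distr) (auto intro!: arg_cong[where f="emeasure M"] simp: prod_emb_iff PiE_iff)
qed

lemma distr_shift_path_law: "distr path_law \<Omega> shift = path_law"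
proof (rule measure_eqI_PiM_infinite)
  show "finite_measure (distr path_law \<Omega> shift)"
    using prob_space.prob_space_distr[OF prob_space_path_law, of shift \<Omega>]
    by (simp add: prob_space_def)
next
  interpret prob_space M by (rule M_prob)
  fix J :: "nat set" and As :: "nat \<Rightarrow> 'a set"
  assume J: "finite J" and As: "\<And>i. i \<in> J \<Longrightarrow> As i \<in> sets borel"
  have "distr path_law \<Omega> shift = distr M \<Omega> (\<lambda>\<omega>. shift (path \<omega>))"
    unfolding path_law_def by (subst distr_distr) (simp_all add: comp_def)
  then show "emeasure (distr path_law \<Omega> shift) (prod_emb UNIV (\<lambda>_. borel) J (Pi\<^sub>E J As))
      = emeasure path_law (prod_emb UNIV (\<lambda>_. borel) J (Pi\<^sub>E J As))"
    using measure_shifted_cylinder[OF J As]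
    by (simp add: path_law_def emeasure_distr_cylinder[OF _ J As] emeasure_eq_measure shift_def path_def)
qed simp_all

lemma ergodic_mpt_shift: "ergodic_mpt path_law shift"
proof -
  interpret prob_space path_law by (rule prob_space_path_law)
  show ?thesis
  proof (unfold_locales)
    show "shift \<in> measurable path_law path_law" by simp
    show "distr path_law path_law shift = path_law"
      using distr_shift_path_law by (simp cong: distr_cong)
    fix S assume S: "S \<in> sets path_law" and "\<forall>w\<in>space path_law. shift w \<in> S \<longleftrightarrow> w \<in> S"
    then have "\<forall>f. f \<in> S \<longleftrightarrow> (\<lambda>n. f (Suc n)) \<in> S" by (auto simp: shift_def[abs_def])
    then show "measure path_law S = 0 \<or> measure path_law S = 1"
      using ergodic[of S] S measure_path_law[of S] by (auto simp: path_def[abs_def])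
  qed
qed

end

locale reactive_chain = stationary_chain p \<pi> M X + reactive_sets p \<pi> A B
  for p :: "'a::euclidean_space \<Rightarrow> 'a \<Rightarrow> real" and \<pi> M and X :: "nat \<Rightarrow> 'w \<Rightarrow> 'a" and A B
begin

definition reactive_paths :: "(nat \<Rightarrow> 'a) set" where
  "reactive_paths = {f. f 0 \<in> A \<and> (\<exists>j>0. f j \<in> B \<and> (\<forall>i. 0 < i \<and> i < j \<longrightarrow> f i \<notin> A \<union> B))}"

text \<open>Reactive segments \<open>X\<^sub>0, \<dots>, X\<^sub>j\<^sub>+\<^sub>1\<close> with exactly \<open>j\<close> interior points.\<close>
definition reactive_paths_length :: "nat \<Rightarrow> (nat \<Rightarrow> 'a) set" where
  "reactive_paths_length j = {f. f 0 \<in> A \<and> (\<forall>i<j. f (Suc i) \<in> - (A \<union> B)) \<and> f (Suc j) \<in> B}"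

lemma reactive_paths_measurable [measurable]: "reactive_paths \<in> sets \<Omega>"
proof -
  have "reactive_paths = {f\<in>space \<Omega>. f 0 \<in> A \<and> (\<exists>j::nat. 0 < j \<and> f j \<in> B \<and> (\<forall>i::nat. 0 < i \<and> i < j \<longrightarrow> f i \<notin> A \<union> B))}"
    by (auto simp: reactive_paths_def space_PiM)
  also have "\<dots> \<in> sets \<Omega>" by measurable
  finally show ?thesis .
qed

lemma reactive_paths_length_measurable [measurable]: "reactive_paths_length j \<in> sets \<Omega>"
proof -
  have "reactive_paths_length j = {f\<in>space \<Omega>. f 0 \<in> A \<and> (\<forall>i<j. f (Suc i) \<in> - (A \<union> B)) \<and> f (Suc j) \<in> B}"
    by (auto simp: reactive_paths_length_def space_PiM)
  also have "\<dots> \<in> sets \<Omega>" by measurable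
  finally show ?thesis .
qed

lemma reactive_paths_eq_UN: "reactive_paths = (\<Union>j. reactive_paths_length j)"
proof (intro equalityI subsetI)
  fix f assume "f \<in> reactive_paths"
  then obtain j where "f 0 \<in> A" "0 < j" "f j \<in> B" "\<forall>i. 0 < i \<and> i < j \<longrightarrow> f i \<notin> A \<union> B"
    by (auto simp: reactive_paths_def)
  then show "f \<in> (\<Union>j. reactive_paths_length j)"
    by (cases j) (auto simp: reactive_paths_length_def)
next
  fix f assume "f \<in> (\<Union>j. reactive_paths_length j)"
  then obtain j where j: "f 0 \<in> A" "\<forall>i<j. f (Suc i) \<in> - (A \<union> B)" "f (Suc j) \<in> B"
    by (auto simp: reactive_paths_length_def)
  have "f i \<notin> A \<union> B" if "0 < i" "i < Suc j" for i
    using j(2) that by (cases i) auto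
  then show "f \<in> reactive_paths" using j by (auto simp: reactive_paths_def intro!: exI[of _ "Suc j"])
qed

lemma disjoint_family_reactive_paths_length: "disjoint_family reactive_paths_length"
  unfolding disjoint_family_on_def reactive_paths_length_def
  by (auto simp: neq_iff)

lemma funpow_shift: "(shift ^^ m) f = (\<lambda>n. f (n + m))"
  by (induction m arbitrary: f) (auto simp: shift_def)

lemma birkhoff_sum_reactive_paths:
  "birkhoff_sum shift (indicator reactive_paths) n (path \<omega>) = real (reactive_count A B X n \<omega>)"
proof -
  define Q where "Q = {m. \<exists>j>0. X m \<omega> \<in> A \<and> X (m + j) \<omega> \<in> B \<and> (\<forall>i. m < i \<and> i < m + j \<longrightarrow> X i \<omega> \<notin> A \<union> B)}"
  have "(shift ^^ m) (path \<omega>) \<in> reactive_paths \<longleftrightarrow> m \<in> Q" for m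
  proof -
    have "(\<forall>i. 0 < i \<and> i < j \<longrightarrow> X (i + m) \<omega> \<notin> A \<union> B) \<longleftrightarrow> (\<forall>i. m < i \<and> i < m + j \<longrightarrow> X i \<omega> \<notin> A \<union> B)" for j
      by (auto dest: spec[of _ "i - m" for i])
    then show ?thesis by (auto simp: Q_def reactive_paths_def funpow_shift path_def add.commute)
  qed
  then have "birkhoff_sum shift (indicator reactive_paths) n (path \<omega>) = (\<Sum>m<n. indicator Q m)"
    unfolding birkhoff_sum_def by (intro sum.cong) (auto simp: indicator_def)
  also have "\<dots> = real (card ({..<n} \<inter> Q))"
    by (simp add: indicator_def sum.If_cases)
  also have "{..<n} \<inter> Q = {m. m < n \<and> m \<in> Q}" by auto
  finally show ?thesis by (simp add: reactive_count_def Q_def)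
qed

lemma trans_rate_eq_measure_reactive_paths: "trans_rate M A B X = measure path_law reactive_paths"
proof -
  interpret ergodic_mpt path_law shift by (rule ergodic_mpt_shift)
  interpret M: prob_space M by (rule M_prob)
  have "AE f in path_law. (\<lambda>n. birkhoff_sum shift (indicator reactive_paths) n f / n)
      \<longlonglongrightarrow> (\<integral>f. indicator reactive_paths f \<partial>path_law)"
    by (rule birkhoff_ergodic) (simp_all add: indicator_def)
  then have "AE \<omega> in M. (\<lambda>n. birkhoff_sum shift (indicator reactive_paths) n (path \<omega>) / n)
      \<longlonglongrightarrow> measure path_law reactive_paths"
    unfolding path_law_def by (subst (asm) AE_distr_iff) (simp_all add: path_law_def[symmetric])
  then have rate: "AE \<omega> in M. (\<lambda>n. real (reactive_count A B X n \<omega>) / real n) \<longlonglongrightarrow> measure path_law reactive_paths"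
    by (simp add: birkhoff_sum_reactive_paths)
  show ?thesis unfolding trans_rate_def
  proof (rule the_equality)
    show "AE \<omega> in M. (\<lambda>n. real (reactive_count A B X n \<omega>) / real n) \<longlonglongrightarrow> measure path_law reactive_paths"
      by (rule rate)
    fix k assume "AE \<omega> in M. (\<lambda>n. real (reactive_count A B X n \<omega>) / real n) \<longlonglongrightarrow> k"
    then have "AE \<omega> in M. k = measure path_law reactive_paths"
      using rate by eventually_elim (rule LIMSEQ_unique)
    then show "k = measure path_law reactive_paths" by simp
  qed
qed

lemma measure_reactive_paths_length:
  "measure path_law (reactive_paths_length j)
    = (\<integral>x. indicator A x * \<pi> x * path_int p (replicate j (- (A \<union> B)) @ [B]) x \<partial>lborel)"
proof -
  let ?Ss = "replicate j (- (A \<union> B)) @ [B]"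
  have "path \<omega> \<in> reactive_paths_length j \<longleftrightarrow> X 0 \<omega> \<in> A \<and> (\<forall>i<length ?Ss. X (Suc i) \<omega> \<in> ?Ss ! i)" for \<omega>
    by (auto simp: reactive_paths_length_def path_def All_less_Suc nth_append)
  then have "measure path_law (reactive_paths_length j)
      = measure M {\<omega>\<in>space M. X 0 \<omega> \<in> A \<and> (\<forall>i<length ?Ss. X (Suc i) \<omega> \<in> ?Ss ! i)}"
    by (simp only: measure_path_law[OF reactive_paths_length_measurable])
  also have "\<dots> = (\<integral>x. indicator A x * \<pi> x * path_int p ?Ss x \<partial>lborel)"
    by (rule X_law) auto
  finally show ?thesis .
qed

text \<open>The reactive paths leaving \<open>A\<close> within \<open>n + 1\<close> steps have probability
  \<open>\<integral>\<^sub>A \<pi> P (hit_before n)\<close>; letting \<open>n \<rightarrow> \<infinity>\<close> gives \<open>\<integral>\<^sub>A \<pi> P q\<close>.\<close>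
lemma measure_reactive_paths: "measure path_law reactive_paths = (\<integral>x. indicator A x * \<pi> x * P q x \<partial>lborel)"
proof -
  interpret prob_space path_law by (rule prob_space_path_law)
  let ?path = "\<lambda>j. path_int p (replicate j (- (A \<union> B)) @ [B])"
  have partial_sums: "(\<Sum>j<Suc n. measure path_law (reactive_paths_length j))
      = (\<integral>x. indicator A x * \<pi> x * P (hit_before p A B n) x \<partial>lborel)" for n
  proof -
    have sets: "set (replicate j (- (A \<union> B)) @ [B]) \<subseteq> sets borel" for j by auto
    have "integrable lborel (\<lambda>x. indicator A x * \<pi> x * ?path j x)" for j
      using integrable_pi_mult[of "\<lambda>x. indicator A x * ?path j x" 1] abs_path_int_le_1[OF sets]
        path_int_measurable[OF sets]
      by (simp add: indicator_def mult_ac)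
    then have "(\<Sum>j<Suc n. \<integral>x. indicator A x * \<pi> x * ?path j x \<partial>lborel)
        = (\<integral>x. (\<Sum>j<Suc n. indicator A x * \<pi> x * ?path j x) \<partial>lborel)"
      by (intro Bochner_Integration.integral_sum[symmetric])
    then show ?thesis
      by (simp only: measure_reactive_paths_length P_hit_before_eq_path_int_sum sum_distrib_left)
  qed
  have "(\<lambda>j. measure path_law (reactive_paths_length j)) sums measure path_law reactive_paths"
    unfolding reactive_paths_eq_UN
    by (rule finite_measure_UNION) (auto simp: disjoint_family_reactive_paths_length)
  then have "(\<lambda>n. \<Sum>j<Suc n. measure path_law (reactive_paths_length j)) \<longlonglongrightarrow> measure path_law reactive_paths"
    unfolding sums_def by (rule LIMSEQ_Suc)
  then have "(\<lambda>n. \<integral>x. indicator A x * \<pi> x * P (hit_before p A B n) x \<partial>lborel)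
      \<longlonglongrightarrow> measure path_law reactive_paths"
    by (simp only: partial_sums)
  moreover have "(\<lambda>n. \<integral>x. indicator A x * \<pi> x * P (hit_before p A B n) x \<partial>lborel)
      \<longlonglongrightarrow> (\<integral>x. indicator A x * \<pi> x * P q x \<partial>lborel)"
  proof (rule integral_dominated_convergence[where w=\<pi>])
    show "AE x in lborel. norm (indicator A x * \<pi> x * P (hit_before p A B n) x) \<le> \<pi> x" for n
      using pi_pos abs_P_le[OF hit_before_measurable abs_hit_before_le_1]
      by (intro AE_I2) (simp add: abs_mult indicator_def mult_left_le less_imp_le)
  qed (simp_all add: pi_integrable P_hit_before_tendsto tendsto_mult)
  ultimately show ?thesis by (rule LIMSEQ_unique)
qed

lemma dirichlet_energy_committor_eq_trans_rate: "dirichlet_energy p \<pi> q = trans_rate M A B X"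
  by (simp add: trans_rate_eq_measure_reactive_paths measure_reactive_paths dirichlet_energy_committor)

end

theorem proposition2p7:
  fixes p :: "real^'d \<Rightarrow> real^'d \<Rightarrow> real" and \<pi> :: "real^'d \<Rightarrow> real"
    and M :: "'w measure" and X :: "nat \<Rightarrow> 'w \<Rightarrow> real^'d"
    and A B :: "(real^'d) set"
  assumes p_meas: "(\<lambda>(x, y). p x y) \<in> borel_measurable borel"
    and p_pos: "\<And>x y. p x y > 0"
    and p_int: "\<And>x. integrable lborel (\<lambda>y. p x y)"
    and p_norm: "\<And>x. (\<integral>y. p x y \<partial>lborel) = 1"
    and pi_meas: "\<pi> \<in> borel_measurable borel"
    and pi_pos: "\<And>x. \<pi> x > 0"
    and pi_int: "integrable lborel \<pi>"
    and pi_norm: "(\<integral>x. \<pi> x \<partial>lborel) = 1"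
    and reversible: "\<And>x y. p x y * \<pi> x = p y x * \<pi> y"
    and unique_inv: "\<And>\<nu>. prob_space \<nu> \<Longrightarrow> sets \<nu> = sets borel \<Longrightarrow>
         (\<forall>S\<in>sets borel. measure \<nu> S = (\<integral>x. (\<integral>y. indicator S y * p x y \<partial>lborel) \<partial>\<nu>)) \<Longrightarrow>
         \<nu> = density lborel (\<lambda>x. ennreal (\<pi> x))"
    and M_prob: "prob_space M"
    and X_meas: "\<And>n. X n \<in> borel_measurable M"
    and X_law: "\<And>S0 Ss. S0 \<in> sets borel \<Longrightarrow> set Ss \<subseteq> sets borel \<Longrightarrow>
         measure M {\<omega>\<in>space M. X 0 \<omega> \<in> S0 \<and> (\<forall>i<length Ss. X (Suc i) \<omega> \<in> Ss ! i)}
           = (\<integral>x. indicator S0 x * \<pi> x * path_int p Ss x \<partial>lborel)"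
    and ergodic: "\<And>S. S \<in> sets (Pi\<^sub>M UNIV (\<lambda>_. borel :: (real^'d) measure)) \<Longrightarrow>
         (\<forall>f. f \<in> S \<longleftrightarrow> (\<lambda>n. f (Suc n)) \<in> S) \<Longrightarrow>
         measure M {\<omega>\<in>space M. (\<lambda>n. X n \<omega>) \<in> S} \<in> {0, 1}"
    and A_closed: "closed A" and B_closed: "closed B"
    and disj: "A \<inter> B = {}"
    and A_smooth: "smooth_boundary A" and B_smooth: "smooth_boundary B"
    and C_ne: "- (A \<union> B) \<noteq> {}"
  shows "(\<forall>f\<in>F_AB \<pi> A B.
            dirichlet_energy p \<pi> f = trans_rate M A B X
              + dirichlet_energy p \<pi> (\<lambda>x. f x - committor p A B x))
       \<and> committor p A B \<in> F_AB \<pi> A B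
       \<and> dirichlet_energy p \<pi> (committor p A B) = trans_rate M A B X
       \<and> (\<forall>f\<in>F_AB \<pi> A B. dirichlet_energy p \<pi> (committor p A B) \<le> dirichlet_energy p \<pi> f)"
proof -
  txt \<open>Ergodicity is assumed directly on path space.\<close>
  have kernel: "reversible_kernel p \<pi>"
    by (rule reversible_kernel.intro) (simp_all add: p_meas p_pos p_int p_norm pi_meas pi_pos pi_int reversible)
  have "stationary_chain p \<pi> M X"
    by (rule stationary_chain.intro[OF kernel stationary_chain_axioms.intro[OF M_prob X_meas X_law ergodic]])
  moreover have "reactive_sets p \<pi> A B"
    by (rule reactive_sets.intro[OF kernel reactive_sets_axioms.intro])
      (simp_all add: disj borel_closed A_closed B_closed)
  ultimately interpret reactive_chain p \<pi> M X A B
    by (simp add: reactive_chain_def)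
  have rate: "dirichlet_energy p \<pi> (committor p A B) = trans_rate M A B X"
    by (rule dirichlet_energy_committor_eq_trans_rate)
  have split: "dirichlet_energy p \<pi> f = trans_rate M A B X + dirichlet_energy p \<pi> (\<lambda>x. f x - committor p A B x)"
    if "f \<in> F_AB \<pi> A B" for f
    using dirichlet_energy_decomposition[OF that] rate by simp
  have nonneg: "0 \<le> dirichlet_energy p \<pi> g" for g
    by (rule dirichlet_energy_nonneg) (simp add: less_imp_le p_pos)
  show ?thesis
  proof (intro conjI ballI)
    fix f assume f: "f \<in> F_AB \<pi> A B"
    show "dirichlet_energy p \<pi> f = trans_rate M A B X + dirichlet_energy p \<pi> (\<lambda>x. f x - committor p A B x)"
      by (rule split[OF f])
    show "dirichlet_energy p \<pi> (committor p A B) \<le> dirichlet_energy p \<pi> f"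
      using split[OF f] rate nonneg[of "\<lambda>x. f x - committor p A B x"] by linarith
  qed (simp_all add: rate committor_in_F_AB)
qed

end
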